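(* Let $t$ be a normal, almost closed term with $\Gamma\vdash t:\sigma$ for some context $\Gamma$. If $\sigma=\mathbf{L}(\tau)$ then $t$ is a list; if $\sigma=\mathbf{B}$ then $t$ is $\mathsf{tt}$ or $\mathsf{ff}$; if $\sigma=\Diamond$ then $t$ is a variable of type $\Diamond$.
   Context: Types: $\rho,\tau::=\Diamond\mid\mathbf{B}\mid\tau\multimap\rho\mid\tau\otimes\rho\mid\tau\times\rho\mid\mathbf{L}(\tau)$. Raw terms: $r,s,t::=x^\tau\mid c\mid\lambda x^\tau.\,t\mid\langle t,s\rangle\mid ts\mid\{t\}$, where each variable $x^\tau$ carries a type (infinitely many variables of each type), application associates to the left, terms are identified up to renaming of bound variables ($\lambda$ is the only binder), and the constants $c$ with their types are $\mathsf{tt},\mathsf{ff}:\mathbf{B}$; $\mathsf{nil}_\tau:\mathbf{L}(\tau)$; $\mathsf{cons}_\tau:\Diamond\multimap\tau\multimap\mathbf{L}(\tau)\multimap\mathbf{L}(\tau)$; $\otimes_{\tau,\rho}:\tau\multimap\rho\multimap\tau\otimes\rho$. A context is a finite set of typed variables; $\Gamma_1,\Gamma_2$ denotes $\Gamma_1\cup\Gamma_2$ and presupposes $\Gamma_1\cap\Gamma_2=\emptyset$; $x^\tau$ also denotes $\{x^\tau\}$. The relation $\Gamma\vdash t:\tau$ is inductively defined by: (Var) $\Gamma,x^\tau\vdash x:\tau$; (Const) $\Gamma\vdash c:\tau$ for a constant $c$ of type $\tau$; ($\multimap^+$) from $\Gamma\cup\{x^\tau\}\vdash t:\rho$ infer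 $\Gamma\vdash\lambda x^\tau.t:\tau\multimap\rho$; ($\multimap^-$) from $\Gamma_1\vdash t:\tau\multimap\rho$ and $\Gamma_2\vdash s:\tau$ infer $\Gamma_1,\Gamma_2\vdash ts:\rho$; ($\times^+$) from $\Gamma\vdash t:\tau$ and $\Gamma\vdash s:\rho$ infer $\Gamma\vdash\langle t,s\rangle:\tau\times\rho$; ($\times^-_1$) from $\Gamma\vdash t:\tau\times\rho$ infer $\Gamma\vdash t\,\mathsf{tt}:\tau$; ($\times^-_0$) from $\Gamma\vdash t:\tau\times\rho$ infer $\Gamma\vdash t\,\mathsf{ff}:\rho$; ($\mathbf{B}^-$) from $\Gamma_1\vdash t:\mathbf{B}$, $\Gamma_2\vdash s:\tau$, $\Gamma_2\vdash r:\tau$ infer $\Gamma_1,\Gamma_2\vdash t\langle s,r\rangle:\tau$; ($\otimes^-$) from $\Gamma_1\vdash t:\tau\otimes\rho$ and $\Gamma_2,x^\tau,y^\rho\vdash s:\sigma$ infer $\Gamma_1,\Gamma_2\vdash t(\lambda x^\tau.\lambda y^\rho.s):\sigma$; ($\mathbf{L}^-$) from $\Gamma\vdash t:\mathbf{L}(\tau)$ and $\emptyset\vdash s:\Diamond\multimap\tau\multimap\rho\multimap\rho$ infer $\Gamma\vdash t\{s\}:\rho\multimap\rho$. A term is almost closed if all its free variables have type $\Diamond$. Lists: a list with $n$ entries ($n\ge0$) is a term $\mathsf{cons}_\tau d_1a_1(\mathsf{cons}_\tau d_2a_2(\cdots(\mathsf{cons}_\tau d_na_n\,\mathsf{nil}_\tau)\cdots))$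 where the $d_i$ are arbitrary terms of type $\Diamond$ and the $a_i$ arbitrary terms of type $\tau$ (for $n=0$ this is $\mathsf{nil}_\tau$). Conversions $\mapsto$: $(\lambda x.t)s\mapsto t[s/x]$; $\langle t,s\rangle\mathsf{tt}\mapsto t$; $\langle t,s\rangle\mathsf{ff}\mapsto s$; $\mathsf{tt}\langle t,s\rangle\mapsto t$; $\mathsf{ff}\langle t,s\rangle\mapsto s$; $\otimes_{\tau,\rho}ts(\lambda x^\tau.\lambda y^\rho.r)\mapsto r[t,s/x,y]$ (simultaneous substitution); $\mathsf{nil}_\tau\{t\}s\mapsto s$; $\mathsf{cons}_\tau d\,a\,\ell\{t\}s\mapsto t\,d\,a\,(\ell\{t\}s)$ provided $\ell$ is a list. The reduction relation $\to$ is inductively defined by: if $t\mapsto t'$ then $t\to t'$; if $t\to t'$ then $ts\to t's$; if $s\to s'$ then $ts\to ts'$. A term $t$ is normal if there is no $t'$ with $t\to t'$. *)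

theory Defs
  imports Main
begin

datatype ty = TDia | TB | TArr ty ty | TTens ty ty | TProd ty ty | TL ty

datatype const = CTT | CFF | CNil ty | CCons ty | CTens ty ty

fun ctype :: "const \<Rightarrow> ty" where
  "ctype CTT = TB"
| "ctype CFF = TB"
| "ctype (CNil \<tau>) = TL \<tau>"
| "ctype (CCons \<tau>) = TArr TDia (TArr \<tau> (TArr (TL \<tau>) (TL \<tau>)))"
| "ctype (CTens \<tau> \<rho>) = TArr \<tau> (TArr \<rho> (TTens \<tau> \<rho>))"

text \<open>Terms in locally nameless representation (alpha-equivalence classes):
  bound variables are de Bruijn indices, free variables are typed names
  (a variable is a pair of a name and its type).
  Pair t s is the pairing, Brace t is the term written {t}.\<close>
type_synonym var = "nat \<times> ty"

datatype trm = Bnd nat | Fvar nat ty | Cst const | Lam ty trm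
  | Pair trm trm | App trm trm | Brace trm

fun fv :: "trm \<Rightarrow> var set" where
  "fv (Bnd i) = {}"
| "fv (Fvar x \<tau>) = {(x, \<tau>)}"
| "fv (Cst c) = {}"
| "fv (Lam \<tau> b) = fv b"
| "fv (Pair t s) = fv t \<union> fv s"
| "fv (App t s) = fv t \<union> fv s"
| "fv (Brace t) = fv t"

fun opn :: "nat \<Rightarrow> trm \<Rightarrow> trm \<Rightarrow> trm" where
  "opn k u (Bnd i) = (if i = k then u else Bnd i)"
| "opn k u (Fvar x \<tau>) = Fvar x \<tau>"
| "opn k u (Cst c) = Cst c"
| "opn k u (Lam \<tau> b) = Lam \<tau> (opn (Suc k) u b)"
| "opn k u (Pair t s) = Pair (opn k u t) (opn k u s)"
| "opn k u (App t s) = App (opn k u t) (opn k u s)"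
| "opn k u (Brace t) = Brace (opn k u t)"

fun opn2 :: "nat \<Rightarrow> trm \<Rightarrow> trm \<Rightarrow> trm \<Rightarrow> trm" where
  "opn2 k u v (Bnd i) = (if i = Suc k then u else if i = k then v else Bnd i)"
| "opn2 k u v (Fvar x \<tau>) = Fvar x \<tau>"
| "opn2 k u v (Cst c) = Cst c"
| "opn2 k u v (Lam \<tau> b) = Lam \<tau> (opn2 (Suc k) u v b)"
| "opn2 k u v (Pair t s) = Pair (opn2 k u v t) (opn2 k u v s)"
| "opn2 k u v (App t s) = App (opn2 k u v t) (opn2 k u v s)"
| "opn2 k u v (Brace t) = Brace (opn2 k u v t)"

inductive has_type :: "var set \<Rightarrow> trm \<Rightarrow> ty \<Rightarrow> bool" where
  Var: "(x, \<tau>) \<in> \<Gamma> \<Longrightarrow> has_type \<Gamma> (Fvar x \<tau>) \<tau>"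
| Const: "has_type \<Gamma> (Cst c) (ctype c)"
| LamI: "\<lbrakk> (x, \<tau>) \<notin> fv b; has_type (\<Gamma> \<union> {(x, \<tau>)}) (opn 0 (Fvar x \<tau>) b) \<rho> \<rbrakk>
         \<Longrightarrow> has_type \<Gamma> (Lam \<tau> b) (TArr \<tau> \<rho>)"
| LamE: "\<lbrakk> has_type \<Gamma>1 t (TArr \<tau> \<rho>); has_type \<Gamma>2 s \<tau>; \<Gamma>1 \<inter> \<Gamma>2 = {} \<rbrakk>
         \<Longrightarrow> has_type (\<Gamma>1 \<union> \<Gamma>2) (App t s) \<rho>"
| ProdI: "\<lbrakk> has_type \<Gamma> t \<tau>; has_type \<Gamma> s \<rho> \<rbrakk> \<Longrightarrow> has_type \<Gamma> (Pair t s) (TProd \<tau> \<rho>)"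
| ProdE1: "has_type \<Gamma> t (TProd \<tau> \<rho>) \<Longrightarrow> has_type \<Gamma> (App t (Cst CTT)) \<tau>"
| ProdE0: "has_type \<Gamma> t (TProd \<tau> \<rho>) \<Longrightarrow> has_type \<Gamma> (App t (Cst CFF)) \<rho>"
| BoolE: "\<lbrakk> has_type \<Gamma>1 t TB; has_type \<Gamma>2 s \<tau>; has_type \<Gamma>2 r \<tau>; \<Gamma>1 \<inter> \<Gamma>2 = {} \<rbrakk>
         \<Longrightarrow> has_type (\<Gamma>1 \<union> \<Gamma>2) (App t (Pair s r)) \<tau>"
| TensE: "\<lbrakk> has_type \<Gamma>1 t (TTens \<tau> \<rho>);
            has_type (\<Gamma>2 \<union> {(x, \<tau>), (y, \<rho>)}) (opn2 0 (Fvar x \<tau>) (Fvar y \<rho>) s) \<sigma>;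
            \<Gamma>1 \<inter> \<Gamma>2 = {}; (x, \<tau>) \<notin> \<Gamma>2; (y, \<rho>) \<notin> \<Gamma>2; (x, \<tau>) \<noteq> (y, \<rho>);
            (x, \<tau>) \<notin> fv s; (y, \<rho>) \<notin> fv s \<rbrakk>
         \<Longrightarrow> has_type (\<Gamma>1 \<union> \<Gamma>2) (App t (Lam \<tau> (Lam \<rho> s))) \<sigma>"
| ListE: "\<lbrakk> has_type \<Gamma> t (TL \<tau>); has_type {} s (TArr TDia (TArr \<tau> (TArr \<rho> \<rho>))) \<rbrakk>
         \<Longrightarrow> has_type \<Gamma> (App t (Brace s)) (TArr \<rho> \<rho>)"

inductive is_list :: "ty \<Rightarrow> trm \<Rightarrow> bool" where
  "is_list \<tau> (Cst (CNil \<tau>))"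
| "is_list \<tau> l \<Longrightarrow> is_list \<tau> (App (App (App (Cst (CCons \<tau>)) d) a) l)"

inductive conv :: "trm \<Rightarrow> trm \<Rightarrow> bool" where
  Beta: "conv (App (Lam \<tau> t) s) (opn 0 s t)"
| Fst: "conv (App (Pair t s) (Cst CTT)) t"
| Snd: "conv (App (Pair t s) (Cst CFF)) s"
| IfT: "conv (App (Cst CTT) (Pair t s)) t"
| IfF: "conv (App (Cst CFF) (Pair t s)) s"
| Tens: "conv (App (App (App (Cst (CTens \<tau> \<rho>)) t) s) (Lam \<tau> (Lam \<rho> r))) (opn2 0 t s r)"
| Nil: "conv (App (App (Cst (CNil \<tau>)) (Brace t)) s) s"
| Cons: "is_list \<tau>' l \<Longrightarrow>
    conv (App (App (App (App (App (Cst (CCons \<tau>)) d) a) l) (Brace t)) s)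
         (App (App (App t d) a) (App (App l (Brace t)) s))"

inductive red :: "trm \<Rightarrow> trm \<Rightarrow> bool" where
  "conv t t' \<Longrightarrow> red t t'"
| "red t t' \<Longrightarrow> red (App t s) (App t' s)"
| "red s s' \<Longrightarrow> red (App t s) (App t s')"

definition normal :: "trm \<Rightarrow> bool" where
  "normal t \<longleftrightarrow> \<not> (\<exists>t'. red t t')"

definition almost_closed :: "trm \<Rightarrow> bool" where
  "almost_closed t \<longleftrightarrow> (\<forall>(x, \<tau>) \<in> fv t. \<tau> = TDia)"

end

theory Submission
  imports Defs
begin

text \<open>The theorem is strengthened to a canonical-forms invariant covering every type, proved by
  induction on the typing derivation. A variable is canonical because almost closedness forces its
  type to be \<open>\<Diamond>\<close>; for every elimination rule, the eliminated subterm is canonical by induction,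
  and then the application is either a redex, contradicting normality, or canonical again.\<close>

text \<open>An iteration \<open>l{s}\<close> over a list is normal at arrow type: the list redex only
  fires once the start value is supplied.\<close>

fun canonical :: "trm \<Rightarrow> ty \<Rightarrow> bool" where
  "canonical t (TL \<tau>) = is_list \<tau> t"
| "canonical t TB = (t = Cst CTT \<or> t = Cst CFF)"
| "canonical t TDia = (\<exists>x. t = Fvar x TDia)"
| "canonical t (TArr \<alpha> \<beta>) =
    ((\<exists>\<tau> b. t = Lam \<tau> b) \<or>
     (\<exists>\<tau>. t = Cst (CCons \<tau>) \<and> \<alpha> = TDia \<and> \<beta> = TArr \<tau> (TArr (TL \<tau>) (TL \<tau>))) \<or>
     (\<exists>\<tau> d. t = App (Cst (CCons \<tau>)) d \<and> \<alpha> = \<tau> \<and> \<beta> = TArr (TL \<tau>) (TL \<tau>)) \<or>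
     (\<exists>\<tau> d a. t = App (App (Cst (CCons \<tau>)) d) a \<and> \<alpha> = TL \<tau> \<and> \<beta> = TL \<tau>) \<or>
     (\<exists>\<tau> \<rho>. t = Cst (CTens \<tau> \<rho>) \<and> \<alpha> = \<tau> \<and> \<beta> = TArr \<rho> (TTens \<tau> \<rho>)) \<or>
     (\<exists>\<tau> \<rho> a. t = App (Cst (CTens \<tau> \<rho>)) a \<and> \<alpha> = \<rho> \<and> \<beta> = TTens \<tau> \<rho>) \<or>
     (\<exists>\<tau> l s. t = App l (Brace s) \<and> is_list \<tau> l))"
| "canonical t (TTens \<alpha> \<beta>) = (\<exists>a b. t = App (App (Cst (CTens \<alpha> \<beta>)) a) b)"
| "canonical t (TProd \<alpha> \<beta>) = (\<exists>a b. t = Pair a b)"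

lemma normal_AppD:
  assumes "normal (App t s)"
  shows "normal t" "normal s" "\<not> conv (App t s) u"
  using assms unfolding normal_def by (auto intro: red.intros)

lemma almost_closed_AppD:
  assumes "almost_closed (App t s)"
  shows "almost_closed t" "almost_closed s"
  using assms unfolding almost_closed_def by auto

lemma not_normal_list_iteration:
  assumes "is_list \<tau> l"
  shows "\<not> normal (App (App l (Brace s)) u)"
  using assms by cases (auto simp: normal_def intro: red.intros conv.intros)

lemma canonical_App:
  assumes t: "canonical t (TArr \<tau> \<rho>)" and s: "canonical s \<tau>" and normal: "normal (App t s)"
  shows "canonical (App t s) \<rho>"
  using t
proof (elim canonical.simps(4)[THEN iffD1, elim_format] disjE exE conjE)
  fix \<tau>' b
  assume "t = Lam \<tau>' b"
  then show ?thesis using normal_AppD(3)[OF normal] conv.Beta by blast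
next
  fix \<tau>' d a
  assume "t = App (App (Cst (CCons \<tau>')) d) a" "\<tau> = TL \<tau>'" "\<rho> = TL \<tau>'"
  then show ?thesis using s by (simp add: is_list.intros)
next
  fix \<tau>' l s'
  assume "t = App l (Brace s')" "is_list \<tau>' l"
  then show ?thesis using not_normal_list_iteration normal by blast
qed auto

lemma canonical_if_normal_almost_closed:
  assumes "has_type \<Gamma> t \<sigma>" "normal t" "almost_closed t"
  shows "canonical t \<sigma>"
  using assms
proof (induction rule: has_type.induct)
  case (Var x \<tau> \<Gamma>)
  then show ?case by (simp add: almost_closed_def)
next
  case (Const \<Gamma> c)
  then show ?case by (cases c) (auto intro: is_list.intros)
next
  case (LamE \<Gamma>1 t \<tau> \<rho> \<Gamma>2 s)
  then show ?case
    using canonical_App normal_AppD almost_closed_AppD by metis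
next
  case (ProdE1 \<Gamma> t \<tau> \<rho>)
  then have "canonical t (TProd \<tau> \<rho>)" using normal_AppD almost_closed_AppD by metis
  then show ?case using normal_AppD(3)[OF ProdE1.prems(1)] conv.Fst by auto
next
  case (ProdE0 \<Gamma> t \<tau> \<rho>)
  then have "canonical t (TProd \<tau> \<rho>)" using normal_AppD almost_closed_AppD by metis
  then show ?case using normal_AppD(3)[OF ProdE0.prems(1)] conv.Snd by auto
next
  case (BoolE \<Gamma>1 t \<Gamma>2 s \<tau> r)
  then have "canonical t TB" using normal_AppD almost_closed_AppD by metis
  then show ?case using normal_AppD(3)[OF BoolE.prems(1)] conv.IfT conv.IfF by (metis canonical.simps(2))
next
  case (TensE \<Gamma>1 t \<tau> \<rho> \<Gamma>2 x y s \<sigma>)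
  then have "canonical t (TTens \<tau> \<rho>)" using normal_AppD almost_closed_AppD by metis
  then show ?case using normal_AppD(3)[OF TensE.prems(1)] conv.Tens by (metis canonical.simps(5))
next
  case (ListE \<Gamma> t \<tau> s \<rho>)
  then have "canonical t (TL \<tau>)" using normal_AppD almost_closed_AppD by metis
  then show ?case by auto
qed simp_all

theorem proposition3p6:
  assumes "finite \<Gamma>"
    and "has_type \<Gamma> t \<sigma>"
    and "normal t"
    and "almost_closed t"
  shows "(\<forall>\<tau>. \<sigma> = TL \<tau> \<longrightarrow> is_list \<tau> t)
       \<and> (\<sigma> = TB \<longrightarrow> t = Cst CTT \<or> t = Cst CFF)
       \<and> (\<sigma> = TDia \<longrightarrow> (\<exists>x. t = Fvar x TDia))"
  using canonical_if_normal_almost_closed[OF assms(2-4)] by auto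

end
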